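(* Let $H$ be a simple $3$-connected graph and $\mathcal{F}$ an arbitrary family of injective maps from $X=\{a,b,c,d\}$ to $V(H)$. Let $G$ be a $2$-connected graph with $X\subseteq V(G)$ and a $2$-separation $(A,B)$ with $A\cap B=\{u,v\}$, and let $G_A=G[A]\cup\{uv\}$ (with any resulting parallel edge removed). If $X\subseteq A$, then $G$ has an $H(X)$-minor if and only if $G_A$ has an $H(X)$-minor.
   Context: A $2$-separation is a pair $(A,B)$ with $A\cup B=V(G)$, $|A\cap B|\le2$ and no edge between $A\setminus B$ and $B\setminus A$. An $H$-model in $G$ is a family $\{G_x:x\in V(H)\}$ of pairwise vertex-disjoint connected subgraphs of $G$ such that for every edge $xy\in E(H)$ some vertex of $G_x$ is adjacent in $G$ to some vertex of $G_y$. For injective $\pi:X\to V(H)$, $G$ has an $H(X)$-minor with respect to $\pi$ if there is an $H$-model with $w\in V(G_{\pi(w)})$ for all $w\in X$; $G$ has an $H(X)$-minor (with respect to $\mathcal{F}$) if this holds for some $\pi\in\mathcal{F}$. *)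

theory Defs
  imports Main
begin

definition graph :: "'a set \<Rightarrow> ('a \<Rightarrow> 'a \<Rightarrow> bool) \<Rightarrow> bool" where
  "graph V E \<longleftrightarrow> finite V \<and> (\<forall>x y. E x y \<longrightarrow> x \<in> V \<and> y \<in> V \<and> x \<noteq> y \<and> E y x)"

definition connected_set :: "'a set \<Rightarrow> ('a \<Rightarrow> 'a \<Rightarrow> bool) \<Rightarrow> 'a set \<Rightarrow> bool" where
  "connected_set V E S \<longleftrightarrow> S \<noteq> {} \<and> S \<subseteq> V \<and>
     (\<forall>x\<in>S. \<forall>y\<in>S. (\<lambda>p q. E p q \<and> p \<in> S \<and> q \<in> S)\<^sup>*\<^sup>* x y)"

definition k_connected :: "nat \<Rightarrow> 'a set \<Rightarrow> ('a \<Rightarrow> 'a \<Rightarrow> bool) \<Rightarrow> bool" where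
  "k_connected k V E \<longleftrightarrow> card V > k \<and>
     (\<forall>S \<subseteq> V. card S < k \<longrightarrow> connected_set V E (V - S))"

definition two_separation :: "'a set \<Rightarrow> ('a \<Rightarrow> 'a \<Rightarrow> bool) \<Rightarrow> 'a set \<Rightarrow> 'a set \<Rightarrow> bool" where
  "two_separation V E A B \<longleftrightarrow> A \<union> B = V \<and> card (A \<inter> B) \<le> 2 \<and>
     A - B \<noteq> {} \<and> B - A \<noteq> {} \<and>
     (\<forall>x\<in>A - B. \<forall>y\<in>B - A. \<not> E x y)"

text \<open>An H-model in G, given by its branch sets \<open>M x\<close> (vertex sets of the
connected subgraphs G_x; a connected subgraph may be replaced by the subgraph
induced on its vertex set).\<close>
definition H_model :: "'b set \<Rightarrow> ('b \<Rightarrow> 'b \<Rightarrow> bool) \<Rightarrow> 'a set \<Rightarrow> ('a \<Rightarrow> 'a \<Rightarrow> bool)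
    \<Rightarrow> ('b \<Rightarrow> 'a set) \<Rightarrow> bool" where
  "H_model VH EH VG EG M \<longleftrightarrow>
     (\<forall>x\<in>VH. connected_set VG EG (M x)) \<and>
     (\<forall>x\<in>VH. \<forall>y\<in>VH. x \<noteq> y \<longrightarrow> M x \<inter> M y = {}) \<and>
     (\<forall>x\<in>VH. \<forall>y\<in>VH. EH x y \<longrightarrow> (\<exists>p\<in>M x. \<exists>q\<in>M y. EG p q))"

definition rooted_minor_wrt :: "'b set \<Rightarrow> ('b \<Rightarrow> 'b \<Rightarrow> bool) \<Rightarrow> 'a set \<Rightarrow> ('a \<Rightarrow> 'b)
    \<Rightarrow> 'a set \<Rightarrow> ('a \<Rightarrow> 'a \<Rightarrow> bool) \<Rightarrow> bool" where
  "rooted_minor_wrt VH EH X \<pi> VG EG \<longleftrightarrow>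
     (\<exists>M. H_model VH EH VG EG M \<and> (\<forall>w\<in>X. w \<in> M (\<pi> w)))"

definition rooted_minor :: "'b set \<Rightarrow> ('b \<Rightarrow> 'b \<Rightarrow> bool) \<Rightarrow> 'a set \<Rightarrow> ('a \<Rightarrow> 'b) set
    \<Rightarrow> 'a set \<Rightarrow> ('a \<Rightarrow> 'a \<Rightarrow> bool) \<Rightarrow> bool" where
  "rooted_minor VH EH X F VG EG \<longleftrightarrow> (\<exists>\<pi>\<in>F. rooted_minor_wrt VH EH X \<pi> VG EG)"

definition side_graph :: "('a \<Rightarrow> 'a \<Rightarrow> bool) \<Rightarrow> 'a set \<Rightarrow> 'a \<Rightarrow> 'a \<Rightarrow> 'a \<Rightarrow> 'a \<Rightarrow> bool" where
  "side_graph E A u v = (\<lambda>x y. (E x y \<and> x \<in> A \<and> y \<in> A) \<or>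
      (u \<noteq> v \<and> ((x = u \<and> y = v) \<or> (x = v \<and> y = u))))"

end

theory Submission
  imports Defs
begin

text \<open>A branch set of an H-model in G that meets B - A but avoids the separator
{u, v} lies entirely in B - A. If one branch set did, then so would every branch set
reachable from it in H after deleting the at most two vertices whose branch sets
contain u or v; as H is 3-connected this includes one of the three roots in A, which
is absurd. Hence intersecting every branch set with A, and replacing each excursion
into B - A (which leaves and re-enters through u and v) by the edge uv, gives a model
in G_A. Conversely, 2-connectivity of G attaches some component of G[B - A] to both u
and v, and adding it to the branch set containing u realises the edge uv in G.\<close>

abbreviation reach_in :: "('a \<Rightarrow> 'a \<Rightarrow> bool) \<Rightarrow> 'a set \<Rightarrow> 'a \<Rightarrow> 'a \<Rightarrow> bool" where
  "reach_in E S \<equiv> (\<lambda>p q. E p q \<and> p \<in> S \<and> q \<in> S)\<^sup>*\<^sup>*"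

lemma graph_sym: "graph V E \<Longrightarrow> E x y \<Longrightarrow> E y x"
  unfolding graph_def by blast

lemma graph_edge_in: "graph V E \<Longrightarrow> E x y \<Longrightarrow> x \<in> V \<and> y \<in> V \<and> x \<noteq> y"
  unfolding graph_def by blast

lemma reach_in_lift:
  assumes "reach_in E S x y" "\<And>s t. E s t \<Longrightarrow> s \<in> S \<Longrightarrow> t \<in> S \<Longrightarrow> reach_in E' T s t"
  shows "reach_in E' T x y"
  using assms(1) by induction (auto intro: rtranclp_trans assms(2))

lemma reach_in_mono: "reach_in E S x y \<Longrightarrow> S \<subseteq> T \<Longrightarrow> reach_in E T x y"
  by (erule reach_in_lift) auto

lemma reach_in_mem: "reach_in E S x y \<Longrightarrow> x \<in> S \<Longrightarrow> y \<in> S"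
  by (induction rule: rtranclp_induct) auto

lemma reach_in_sym:
  assumes "graph V E" "reach_in E S x y"
  shows "reach_in E S y x"
  using assms(2)
proof induction
  case (step y z)
  from step.hyps(2) have "E z y \<and> z \<in> S \<and> y \<in> S" using graph_sym[OF assms(1)] by blast
  then show ?case using step.IH by (rule converse_rtranclp_into_rtranclp)
qed simp

lemma k_connected_delete:
  "k_connected k V E \<Longrightarrow> S \<subseteq> V \<Longrightarrow> card S < k \<Longrightarrow> connected_set V E (V - S)"
  unfolding k_connected_def by blast

lemma connected_set_reach:
  "connected_set V E S \<Longrightarrow> x \<in> S \<Longrightarrow> y \<in> S \<Longrightarrow> reach_in E S x y"
  unfolding connected_set_def by blast

lemma connected_setI_hub:
  assumes "graph V E" "S \<subseteq> V" "h \<in> S" "\<And>s. s \<in> S \<Longrightarrow> reach_in E S s h"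
  shows "connected_set V E S"
  unfolding connected_set_def
  using assms rtranclp_trans[OF assms(4) reach_in_sym[OF assms(1,4)]] by blast

lemma two_separation_neighbour:
  assumes "graph V E" "two_separation V E A B" "y \<in> B - A" "E y z"
  shows "z \<in> B"
  using assms graph_sym[OF assms(1,4)] graph_edge_in[OF assms(1,4)]
  unfolding two_separation_def by blast

lemma connected_set_in_side:
  assumes "graph V E" "two_separation V E A B" "connected_set V E K"
    "K \<inter> (A \<inter> B) = {}" "q \<in> K" "q \<in> B - A"
  shows "K \<subseteq> B - A"
proof
  fix r assume "r \<in> K"
  with assms(3,5) have "reach_in E K q r" by (rule connected_set_reach)
  then show "r \<in> B - A"
  proof induction
    case (step y z)
    then have "z \<in> B" using two_separation_neighbour[OF assms(1,2)] by blast
    then show ?case using step.prems step.hyps assms(4) by blast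
  qed (fact assms(6))
qed

lemma connected_set_meets_separator:
  assumes gG: "graph VG EG" and sep: "two_separation VG EG A B"
    and K: "connected_set VG EG K" "\<not> K \<subseteq> B - A"
    and p: "p \<in> K" "p \<in> B - A \<or> (q \<in> B - A \<and> EG q p)"
  shows "K \<inter> (A \<inter> B) \<noteq> {}"
proof
  assume avoid: "K \<inter> (A \<inter> B) = {}"
  have "p \<in> B" using p(2) two_separation_neighbour[OF gG sep] by blast
  then have "p \<in> B - A" using p(1) avoid by blast
  then show False using connected_set_in_side[OF gG sep K(1) avoid p(1)] K(2) by blast
qed

lemma card_branch_sets_meeting_le:
  assumes "H_model VH EH VG EG M" "finite Z"
  shows "card {y \<in> VH. M y \<inter> Z \<noteq> {}} \<le> card Z"
proof (rule card_inj_on_le)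
  let ?pick = "\<lambda>y. SOME z. z \<in> M y \<inter> Z"
  have pick: "?pick y \<in> M y \<inter> Z" if "M y \<inter> Z \<noteq> {}" for y
  proof -
    from that obtain z where "z \<in> M y \<inter> Z" by blast
    then show ?thesis by (rule someI)
  qed
  show "inj_on ?pick {y \<in> VH. M y \<inter> Z \<noteq> {}}"
  proof (rule inj_onI)
    fix y y' assume y: "y \<in> {y \<in> VH. M y \<inter> Z \<noteq> {}}" and y': "y' \<in> {y \<in> VH. M y \<inter> Z \<noteq> {}}"
      and same: "?pick y = ?pick y'"
    have "?pick y \<in> M y \<inter> M y'" using pick[of y] pick[of y'] y y' same by auto
    then show "y = y'" using assms(1) y y' unfolding H_model_def by blast
  qed
  show "?pick ` {y \<in> VH. M y \<inter> Z \<noteq> {}} \<subseteq> Z"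
    using pick by auto
qed (fact assms(2))

lemma branch_sets_stay_in_side:
  assumes gG: "graph VG EG" and sep: "two_separation VG EG A B"
    and M: "H_model VH EH VG EG M" and T: "connected_set VH EH T"
    and avoid: "\<forall>y\<in>T. M y \<inter> (A \<inter> B) = {}"
    and "x \<in> T" "M x \<subseteq> B - A" "y \<in> T"
  shows "M y \<subseteq> B - A"
proof -
  have "reach_in EH T x y" using T assms(6,8) by (rule connected_set_reach)
  then show ?thesis
  proof induction
    case (step y z)
    then have yz: "y \<in> VH" "z \<in> VH" "EH y z" using T unfolding connected_set_def by blast+
    then obtain p q where pq: "p \<in> M y" "q \<in> M z" "EG p q"
      using M unfolding H_model_def by blast
    have "q \<in> B" using two_separation_neighbour[OF gG sep _ pq(3)] step.IH pq(1) by blast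
    then have "q \<in> B - A" using avoid step.hyps pq(2) by blast
    moreover have "connected_set VG EG (M z)" using M yz(2) unfolding H_model_def by blast
    ultimately show ?case
      using connected_set_in_side[OF gG sep] avoid step.hyps pq(2) by blast
  qed (fact assms(7))
qed

lemma branch_set_not_in_far_side:
  assumes gH: "graph VH EH" and kH: "k_connected 3 VH EH"
    and gG: "graph VG EG" and sep: "two_separation VG EG A B"
    and M: "H_model VH EH VG EG M" and three: "3 \<le> card {y \<in> VH. M y \<inter> A \<noteq> {}}"
    and x: "x \<in> VH"
  shows "\<not> M x \<subseteq> B - A"
proof
  assume far: "M x \<subseteq> B - A"
  define S where "S = {y \<in> VH. M y \<inter> (A \<inter> B) \<noteq> {}}"
  have "finite VG" "A \<union> B = VG" using gG sep unfolding graph_def two_separation_def by blast+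
  then have "finite (A \<inter> B)" by (metis finite_Int finite_Un)
  then have "card S \<le> card (A \<inter> B)"
    unfolding S_def by (rule card_branch_sets_meeting_le[OF M])
  also have "\<dots> \<le> 2" using sep unfolding two_separation_def by blast
  finally have cardS: "card S \<le> 2" .
  have finS: "finite S" using gH unfolding graph_def S_def by simp
  have "S \<subseteq> VH" "card S < 3" using cardS unfolding S_def by auto
  then have conn: "connected_set VH EH (VH - S)" by (rule k_connected_delete[OF kH])
  have avoid: "\<forall>y \<in> VH - S. M y \<inter> (A \<inter> B) = {}" unfolding S_def by blast
  have "M x \<inter> (A \<inter> B) = {}" using far by blast
  then have "x \<in> VH - S" using x by (simp add: S_def)
  obtain w where w: "w \<in> VH - S" "M w \<inter> A \<noteq> {}"
  proof -
    have "\<not> {y \<in> VH. M y \<inter> A \<noteq> {}} \<subseteq> S"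
    proof
      assume "{y \<in> VH. M y \<inter> A \<noteq> {}} \<subseteq> S"
      then have "card {y \<in> VH. M y \<inter> A \<noteq> {}} \<le> card S" by (rule card_mono[OF finS])
      then show False using cardS three by linarith
    qed
    then show ?thesis using that by blast
  qed
  have "M w \<subseteq> B - A"
    using branch_sets_stay_in_side[OF gG sep M conn avoid \<open>x \<in> VH - S\<close> far w(1)] .
  then show False using w(2) by blast
qed

lemma connected_set_restrict_side:
  assumes gG: "graph VG EG" and sep: "two_separation VG EG A B" and uv: "A \<inter> B = {u, v}"
    and K: "connected_set VG EG K" and "K \<inter> A \<noteq> {}"
  shows "connected_set A (side_graph EG A u v) (K \<inter> A)"
proof -
  let ?GA = "side_graph EG A u v"
  have VAB: "VG = A \<union> B" and KV: "K \<subseteq> VG"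
    using sep K unfolding two_separation_def connected_set_def by blast+
  have separator_edge: "?GA z z'" if "z \<in> A \<inter> B" "z' \<in> A \<inter> B" "z \<noteq> z'" for z z'
    using that uv unfolding side_graph_def by auto
  have "reach_in ?GA (K \<inter> A) p r" if pr: "p \<in> K \<inter> A" "r \<in> K \<inter> A" for p r
  proof -
    have "reach_in EG K p r" using K pr by (blast intro: connected_set_reach)
    \<comment> \<open>z is the last vertex of the walk in A; after leaving A the walk can only
        re-enter through the separator.\<close>
    then have "\<exists>z \<in> K \<inter> A. reach_in ?GA (K \<inter> A) p z \<and> (r \<in> A \<longrightarrow> z = r) \<and> (r \<notin> A \<longrightarrow> z \<in> B)"
    proof induction
      case base then show ?case using pr(1) by blast
    next
      case (step y y')
      then obtain z where z: "z \<in> K \<inter> A" "reach_in ?GA (K \<inter> A) p z"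
        "y \<in> A \<longrightarrow> z = y" "y \<notin> A \<longrightarrow> z \<in> B" by blast
      have y'V: "y' \<in> A \<union> B" using step.hyps KV VAB by blast
      show ?case
      proof (cases "y' \<in> A")
        case False
        have "EG y' y" using graph_sym[OF gG] step.hyps by blast
        then have "y \<in> A \<longrightarrow> y \<in> B"
          using two_separation_neighbour[OF gG sep] False y'V by blast
        then show ?thesis using z False by blast
      next
        case y'A: True
        have "?GA z y'" if "z \<noteq> y'"
        proof (cases "y \<in> A")
          case True then show ?thesis using z that step.hyps y'A unfolding side_graph_def by auto
        next
          case False
          then have "y' \<in> B"
            using two_separation_neighbour[OF gG sep] step.hyps KV VAB by blast
          then show ?thesis using separator_edge z False y'A that by blast
        qed
        then have "reach_in ?GA (K \<inter> A) p y'"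
          using z step.hyps y'A by (cases "z = y'") (auto intro: rtranclp.rtrancl_into_rtrancl)
        then show ?thesis using step.hyps y'A by blast
      qed
    qed
    then show ?thesis using pr(2) by blast
  qed
  then show ?thesis using assms(5) unfolding connected_set_def by blast
qed

lemma rooted_minor_wrt_side_graph:
  assumes gH: "graph VH EH" and kH: "k_connected 3 VH EH"
    and gG: "graph VG EG" and sep: "two_separation VG EG A B" and uv: "A \<inter> B = {u, v}"
    and XA: "X \<subseteq> A" and pi: "\<pi> ` X \<subseteq> VH" and three: "3 \<le> card (\<pi> ` X)"
    and minor: "rooted_minor_wrt VH EH X \<pi> VG EG"
  shows "rooted_minor_wrt VH EH X \<pi> A (side_graph EG A u v)"
proof -
  obtain M where M: "H_model VH EH VG EG M" and roots: "\<forall>w\<in>X. w \<in> M (\<pi> w)"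
    using minor unfolding rooted_minor_wrt_def by blast
  have conn: "\<And>x. x \<in> VH \<Longrightarrow> connected_set VG EG (M x)"
    and disj: "\<And>x y. x \<in> VH \<Longrightarrow> y \<in> VH \<Longrightarrow> x \<noteq> y \<Longrightarrow> M x \<inter> M y = {}"
    and edge: "\<And>x y. x \<in> VH \<Longrightarrow> y \<in> VH \<Longrightarrow> EH x y \<Longrightarrow> \<exists>p\<in>M x. \<exists>q\<in>M y. EG p q"
    using M unfolding H_model_def by blast+
  have VAB: "VG = A \<union> B" using sep unfolding two_separation_def by blast
  have MV: "\<And>x. x \<in> VH \<Longrightarrow> M x \<subseteq> VG" using conn unfolding connected_set_def by blast
  have "\<pi> ` X \<subseteq> {y \<in> VH. M y \<inter> A \<noteq> {}}" using roots XA pi by blast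
  moreover have "finite {y \<in> VH. M y \<inter> A \<noteq> {}}" using gH unfolding graph_def by simp
  ultimately have "3 \<le> card {y \<in> VH. M y \<inter> A \<noteq> {}}" using three card_mono by (metis le_trans)
  then have not_far: "\<not> M x \<subseteq> B - A" if "x \<in> VH" for x
    using branch_set_not_in_far_side[OF gH kH gG sep M] that by blast
  define M' where "M' x = M x \<inter> A" for x
  let ?GA = "side_graph EG A u v"
  have "connected_set A ?GA (M' x)" if "x \<in> VH" for x
    unfolding M'_def using not_far[OF that] MV[OF that] VAB
    by (intro connected_set_restrict_side[OF gG sep uv conn[OF that]]) blast
  moreover have "\<exists>p\<in>M' x. \<exists>q\<in>M' y. ?GA p q" if xy: "x \<in> VH" "y \<in> VH" "EH x y" for x y
  proof -
    obtain p q where pq: "p \<in> M x" "q \<in> M y" "EG p q" using edge xy by blast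
    show ?thesis
    proof (cases "p \<in> A \<and> q \<in> A")
      case True then show ?thesis using pq unfolding M'_def side_graph_def by blast
    next
      case False
      have "p \<in> B - A \<or> q \<in> B - A" using False pq(1,2) MV[OF xy(1)] MV[OF xy(2)] VAB by blast
      moreover have "EG q p" using graph_sym[OF gG pq(3)] .
      ultimately have "M x \<inter> (A \<inter> B) \<noteq> {}" "M y \<inter> (A \<inter> B) \<noteq> {}"
        using connected_set_meets_separator[OF gG sep conn[OF xy(1)] not_far[OF xy(1)] pq(1), of q]
          connected_set_meets_separator[OF gG sep conn[OF xy(2)] not_far[OF xy(2)] pq(2), of p] pq(3)
        by blast+
      then obtain z z' where z: "z \<in> M x \<inter> (A \<inter> B)" "z' \<in> M y \<inter> (A \<inter> B)" by blast
      have "x \<noteq> y" using graph_edge_in[OF gH xy(3)] by blast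
      then have "z \<noteq> z'" using disj[OF xy(1,2)] z by blast
      then have "?GA z z'" using z uv unfolding side_graph_def by auto
      then show ?thesis using z unfolding M'_def by blast
    qed
  qed
  ultimately have "H_model VH EH A ?GA M'"
    unfolding H_model_def using disj unfolding M'_def by blast
  moreover have "\<forall>w\<in>X. w \<in> M' (\<pi> w)" using roots XA unfolding M'_def by blast
  ultimately show ?thesis unfolding rooted_minor_wrt_def by blast
qed

lemma connected_set_reachable:
  assumes "graph V E" "S \<subseteq> V" "x \<in> S"
  shows "connected_set V E {y. reach_in E S x y}"
proof (rule connected_setI_hub[OF assms(1)])
  let ?C = "{y. reach_in E S x y}"
  show "?C \<subseteq> V" using reach_in_mem[OF _ assms(3)] assms(2) by blast
  show "x \<in> ?C" by simp
  have fwd: "reach_in E ?C x y" if "reach_in E S x y" for y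
    using that
  proof induction
    case (step y z)
    then have "E y z \<and> y \<in> ?C \<and> z \<in> ?C" by (simp add: rtranclp.rtrancl_into_rtrancl)
    with step.IH show ?case by (rule rtranclp.rtrancl_into_rtrancl)
  qed simp
  then show "reach_in E ?C y x" if "y \<in> ?C" for y
    using that by (intro reach_in_sym[OF assms(1) fwd]) simp
qed

text \<open>Otherwise deleting v would separate the component of G[B - A] containing b0
from A - B.\<close>
lemma component_adjacent_separator:
  assumes gG: "graph VG EG" and kG: "k_connected 2 VG EG"
    and sep: "two_separation VG EG A B" and uv: "A \<inter> B = {u, v}" and b0: "b0 \<in> B - A"
  shows "\<exists>p. reach_in EG (B - A) b0 p \<and> EG p u"
proof -
  have VAB: "VG = A \<union> B" using sep unfolding two_separation_def by blast
  obtain a0 where a0: "a0 \<in> A - B" using sep unfolding two_separation_def by blast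
  have "card {v} < 2" "{v} \<subseteq> VG" using uv VAB by auto
  then have "connected_set VG EG (VG - {v})" by (rule k_connected_delete[OF kG, rotated])
  moreover have "b0 \<in> VG - {v}" "a0 \<in> VG - {v}" using a0 b0 uv VAB by blast+
  ultimately have "reach_in EG (VG - {v}) b0 a0" by (rule connected_set_reach)
  then have "reach_in EG (B - A) b0 a0 \<or> (\<exists>p. reach_in EG (B - A) b0 p \<and> EG p u)"
  proof induction
    case (step y z)
    show ?case
    proof (cases "\<exists>p. reach_in EG (B - A) b0 p \<and> EG p u")
      case False
      then have reach_y: "reach_in EG (B - A) b0 y" using step.IH by blast
      have y: "y \<in> B - A" using reach_in_mem[OF reach_y b0] .
      have "z \<in> B" using two_separation_neighbour[OF gG sep y] step.hyps by blast
      then consider "z \<in> B - A" | "z = u" using uv step.hyps by blast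
      then show ?thesis
      proof cases
        case 1
        then have "reach_in EG (B - A) b0 z"
          using reach_y y step.hyps by (simp add: rtranclp.rtrancl_into_rtrancl)
        then show ?thesis by blast
      qed (use reach_y step.hyps in blast)
    qed blast
  qed simp
  moreover have "\<not> reach_in EG (B - A) b0 a0" using a0 reach_in_mem[OF _ b0] by blast
  ultimately show ?thesis by blast
qed

lemma connected_set_side_graph_extend:
  assumes gG: "graph VG EG" and AV: "A \<subseteq> VG"
    and K: "connected_set A (side_graph EG A u v) K"
    and C: "connected_set VG EG C" and pu: "pu \<in> C" "EG pu u" and pv: "pv \<in> C" "EG pv v"
  shows "connected_set VG EG (if u \<in> K then K \<union> C else K)" (is "connected_set VG EG ?K'")
proof -
  let ?GA = "side_graph EG A u v"
  have virtual_edge: "reach_in EG L u v" if "C \<subseteq> L" "u \<in> L" "v \<in> L" for L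
  proof -
    have "EG u pu \<and> u \<in> L \<and> pu \<in> L" using graph_sym[OF gG pu(2)] that pu(1) by blast
    moreover have "reach_in EG L pu pv"
      using connected_set_reach[OF C pu(1) pv(1)] that(1) by (rule reach_in_mono)
    ultimately have "reach_in EG L u pv" by (rule converse_rtranclp_into_rtranclp)
    moreover have "EG pv v \<and> pv \<in> L \<and> v \<in> L" using pv that by blast
    ultimately show ?thesis by (rule rtranclp.rtrancl_into_rtrancl)
  qed
  obtain h where h: "h \<in> K" using K unfolding connected_set_def by blast
  have lift: "reach_in EG ?K' s t" if "?GA s t" "s \<in> K" "t \<in> K" for s t
  proof (cases "EG s t")
    case True
    moreover have "s \<in> ?K'" "t \<in> ?K'" using that(2,3) by simp_all
    ultimately show ?thesis by (intro r_into_rtranclp) simp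
  next
    case False
    then have st: "(s = u \<and> t = v) \<or> (s = v \<and> t = u)"
      using that(1) unfolding side_graph_def by blast
    then have "u \<in> K" "v \<in> K" using that(2,3) by auto
    then have uv_reach: "reach_in EG ?K' u v" by (intro virtual_edge) simp_all
    show ?thesis using st uv_reach reach_in_sym[OF gG uv_reach] by auto
  qed
  have to_h: "reach_in EG ?K' s h" if "s \<in> K" for s
    using connected_set_reach[OF K that h] by (rule reach_in_lift) (rule lift)
  have from_C: "reach_in EG ?K' s h" if "s \<in> C" "u \<in> K" for s
  proof -
    have "reach_in EG ?K' s pu"
      using connected_set_reach[OF C that(1) pu(1)] by (rule reach_in_mono) (simp add: that(2))
    moreover have "EG pu u \<and> pu \<in> ?K' \<and> u \<in> ?K'" using pu that(2) by auto
    ultimately have "reach_in EG ?K' s u" by (rule rtranclp.rtrancl_into_rtrancl)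
    then show ?thesis using to_h[OF that(2)] by (rule rtranclp_trans)
  qed
  show ?thesis
  proof (rule connected_setI_hub[OF gG])
    show "?K' \<subseteq> VG" using K C AV unfolding connected_set_def by auto
    show "h \<in> ?K'" using h by simp
    show "reach_in EG ?K' s h" if "s \<in> ?K'" for s
      using that to_h from_C by (auto split: if_splits)
  qed
qed

lemma rooted_minor_wrt_of_side_graph:
  assumes gG: "graph VG EG" and kG: "k_connected 2 VG EG"
    and sep: "two_separation VG EG A B" and uv: "A \<inter> B = {u, v}"
    and minor: "rooted_minor_wrt VH EH X \<pi> A (side_graph EG A u v)"
  shows "rooted_minor_wrt VH EH X \<pi> VG EG"
proof -
  let ?GA = "side_graph EG A u v"
  obtain M where M: "H_model VH EH A ?GA M" and roots: "\<forall>w\<in>X. w \<in> M (\<pi> w)"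
    using minor unfolding rooted_minor_wrt_def by blast
  have conn: "\<And>x. x \<in> VH \<Longrightarrow> connected_set A ?GA (M x)"
    and disj: "\<And>x y. x \<in> VH \<Longrightarrow> y \<in> VH \<Longrightarrow> x \<noteq> y \<Longrightarrow> M x \<inter> M y = {}"
    and edge: "\<And>x y. x \<in> VH \<Longrightarrow> y \<in> VH \<Longrightarrow> EH x y \<Longrightarrow> \<exists>p\<in>M x. \<exists>q\<in>M y. ?GA p q"
    using M unfolding H_model_def by blast+
  have VAB: "VG = A \<union> B" using sep unfolding two_separation_def by blast
  have MA: "\<And>x. x \<in> VH \<Longrightarrow> M x \<subseteq> A" using conn unfolding connected_set_def by blast
  obtain b0 where b0: "b0 \<in> B - A" using sep unfolding two_separation_def by blast
  define C where "C = {y. reach_in EG (B - A) b0 y}"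
  have C: "connected_set VG EG C"
    unfolding C_def using b0 VAB by (intro connected_set_reachable[OF gG]) auto
  have CBA: "C \<subseteq> B - A" unfolding C_def using reach_in_mem[OF _ b0] by blast
  obtain pu where pu: "pu \<in> C" "EG pu u"
    using component_adjacent_separator[OF gG kG sep uv b0] unfolding C_def by blast
  obtain pv where pv: "pv \<in> C" "EG pv v"
    using component_adjacent_separator[OF gG kG sep _ b0, of v u] uv unfolding C_def by auto
  define M' where "M' x = (if u \<in> M x then M x \<union> C else M x)" for x
  have "connected_set VG EG (M' x)" if "x \<in> VH" for x
    unfolding M'_def using VAB by (intro connected_set_side_graph_extend[OF gG _ conn[OF that] C pu pv]) blast
  moreover have "M' x \<inter> M' y = {}" if "x \<in> VH" "y \<in> VH" "x \<noteq> y" for x y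
    using disj[OF that] MA[OF that(1)] MA[OF that(2)] CBA unfolding M'_def by auto
  moreover have "\<exists>p\<in>M' x. \<exists>q\<in>M' y. EG p q" if xy: "x \<in> VH" "y \<in> VH" "EH x y" for x y
  proof -
    obtain p q where pq: "p \<in> M x" "q \<in> M y" "?GA p q" using edge xy by blast
    have "EG v pv" using graph_sym[OF gG pv(2)] .
    then show ?thesis
      using pq pv unfolding side_graph_def M'_def by (auto split: if_splits)
  qed
  ultimately have "H_model VH EH VG EG M'" unfolding H_model_def by blast
  moreover have "\<forall>w\<in>X. w \<in> M' (\<pi> w)" using roots unfolding M'_def by auto
  ultimately show ?thesis unfolding rooted_minor_wrt_def by blast
qed

theorem mainTheorem12:
  fixes VH :: "'b set" and EH :: "'b \<Rightarrow> 'b \<Rightarrow> bool"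
    and VG :: "'a set" and EG :: "'a \<Rightarrow> 'a \<Rightarrow> bool"
    and a b c d u v :: 'a and X A B :: "'a set" and F :: "('a \<Rightarrow> 'b) set"
  assumes "graph VH EH" and "k_connected 3 VH EH"
    and "X = {a, b, c, d}" and "distinct [a, b, c, d]"
    and "\<forall>\<pi>\<in>F. inj_on \<pi> X \<and> \<pi> ` X \<subseteq> VH"
    and "graph VG EG" and "k_connected 2 VG EG" and "X \<subseteq> VG"
    and "two_separation VG EG A B" and "A \<inter> B = {u, v}"
    and "X \<subseteq> A"
  shows "rooted_minor VH EH X F VG EG \<longleftrightarrow> rooted_minor VH EH X F A (side_graph EG A u v)"
proof -
  have "rooted_minor_wrt VH EH X \<pi> VG EG \<longleftrightarrow> rooted_minor_wrt VH EH X \<pi> A (side_graph EG A u v)"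
    if "\<pi> \<in> F" for \<pi>
  proof
    have \<pi>: "inj_on \<pi> X" "\<pi> ` X \<subseteq> VH" using assms(5) that by blast+
    then have "card (\<pi> ` X) = 4" using assms(3,4) by (simp add: card_image)
    then show "rooted_minor_wrt VH EH X \<pi> A (side_graph EG A u v)"
      if "rooted_minor_wrt VH EH X \<pi> VG EG"
      by (intro rooted_minor_wrt_side_graph[OF assms(1,2,6,9,10,11) \<pi>(2) _ that]) simp
  qed (rule rooted_minor_wrt_of_side_graph[OF assms(6,7,9,10)])
  then show ?thesis unfolding rooted_minor_def by blast
qed

end
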